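(* Let $c \in (0,1/2]$, $t_1 \in [0,1-2c]$, $t_2 \in [t_1+c,1-c]$, and let $p,q \in (0,1)$ with $p \neq q$. Let $F$, $\Lambda_{p,q}$ and $\gamma_r$ be as described in the context. Then for every $r\in\Lambda_{p,q}$, \[ \int_{F\times F}(x-y)\,d\gamma_r(x,y) = \frac{4(t_2-t_1)(q-r)(p-r)}{(p-q)\big(1-c+c(p+q-2r)\big)} - \left(\frac{p+q-2r}{p-q}\right)\int_{F\times F}|x-y|\,d\gamma_r(x,y). \]
   Context: Let $S_1(x)=cx+t_1$ and $S_2(x)=cx+t_2$ on $[0,1]$. Let $F\subseteq[0,1]$ be the unique nonempty compact set with $F=S_1(F)\cup S_2(F)$. For $p\in(0,1)$, $\mu_p$ is the unique Borel probability measure with $\mu_p = p\,\mu_p\circ S_1^{-1} + (1-p)\,\mu_p\circ S_2^{-1}$. On $[0,1]^2$ define $S_{i,j}(x,y)=(S_i(x),S_j(y))$ for $i,j\in\{1,2\}$. Let $\Lambda_{p,q}$ be the open interval $\max\{0,p+q-1\}<r<\min\{p,q\}$. For $r\in\Lambda_{p,q}$, $\gamma_r$ is the unique Borel probability measure on $[0,1]^2$ satisfying $\gamma_r = r\,\gamma_r\circ S_{1,1}^{-1} + (p-r)\,\gamma_r\circ S_{1,2}^{-1} + (q-r)\,\gamma_r\circ S_{2,1}^{-1} + (1-p-q+r)\,\gamma_r\circ S_{2,2}^{-1}$; it is supported on $F\times F$ and is a coupling of $\mu_p$ and $\mu_q$. *)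

theory Defs
  imports "HOL-Probability.Probability"
begin

definition sim :: "real \<Rightarrow> real \<Rightarrow> real \<Rightarrow> real" where
  "sim c t x = c * x + t"

definition attractor :: "real \<Rightarrow> real \<Rightarrow> real \<Rightarrow> real set" where
  "attractor c t1 t2 = (THE F. compact F \<and> F \<noteq> {} \<and>
      F = sim c t1 ` F \<union> sim c t2 ` F)"

definition Lambda_pq :: "real \<Rightarrow> real \<Rightarrow> real set" where
  "Lambda_pq p q = {r. max 0 (p + q - 1) < r \<and> r < min p q}"

definition sim2 :: "real \<Rightarrow> real \<Rightarrow> real \<Rightarrow> real \<times> real \<Rightarrow> real \<times> real" where
  "sim2 c ti tj z = (sim c ti (fst z), sim c tj (snd z))"

definition gamma_r :: "real \<Rightarrow> real \<Rightarrow> real \<Rightarrow> real \<Rightarrow> real \<Rightarrow> real \<Rightarrow> (real \<times> real) measure" where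
  "gamma_r c t1 t2 p q r = (THE M. prob_space M \<and> sets M = sets (borel :: (real \<times> real) measure) \<and>
     emeasure M ({0..1} \<times> {0..1}) = 1 \<and>
     (\<forall>A \<in> sets (borel :: (real \<times> real) measure).
        emeasure M A = ennreal r * emeasure M (sim2 c t1 t1 -` A)
                     + ennreal (p - r) * emeasure M (sim2 c t1 t2 -` A)
                     + ennreal (q - r) * emeasure M (sim2 c t2 t1 -` A)
                     + ennreal (1 - p - q + r) * emeasure M (sim2 c t2 t2 -` A)))"

end

theory Submission
  imports Defs
begin

text \<open>
  The measure \<open>\<gamma>\<^sub>r\<close> is the unique fixed point of the Markov operator of the iterated function
  system \<open>S\<^sub>i\<^sub>,\<^sub>j\<close> with weights \<open>r, p - r, q - r, 1 - p - q + r\<close>: the operator contracts the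
  distance between two fixed points, tested against Lipschitz functions, by the factor \<open>c\<close>,
  and a fixed point is obtained by pushing the product measure on address sequences through
  the coding map. Every fixed point lives on each stage of the Hutchinson iteration of the
  unit square, hence on \<open>F \<times> F\<close>.

  Self-similarity turns the first moments into linear equations:
  \<open>(1 - c) \<integral>x = p t\<^sub>1 + (1 - p) t\<^sub>2\<close>, likewise for \<open>y\<close> with \<open>q\<close>. Since \<open>S\<^sub>1[0,1]\<close> lies to the
  left of \<open>S\<^sub>2[0,1]\<close>, \<open>|x - y|\<close> is affine on each of the four pieces, which gives
  \<open>(1 - c + c (p + q - 2r)) \<integral>|x - y| = (p + q - 2r)(t\<^sub>2 - t\<^sub>1) + c (q - p) \<integral>(x - y)\<close>.
  Eliminating \<open>\<integral>(x - y)\<close> between these equations yields the formula.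
\<close>

section \<open>The attractor of two similarities\<close>

definition hutchinson :: "real \<Rightarrow> real \<Rightarrow> real \<Rightarrow> real set \<Rightarrow> real set" where
  "hutchinson c t1 t2 A = sim c t1 ` A \<union> sim c t2 ` A"

lemma dist_sim: "dist (sim c t x) (sim c t y) = \<bar>c\<bar> * dist x y"
  by (simp add: sim_def dist_real_def right_diff_distrib[symmetric] abs_mult)

lemma hutchinson_invariant_subset:
  assumes c: "\<bar>c\<bar> < 1"
    and A: "bounded A" "A \<subseteq> hutchinson c t1 t2 A"
    and B: "closed B" "bounded B" "B \<noteq> {}" "hutchinson c t1 t2 B \<subseteq> B"
  shows "A \<subseteq> B"
proof
  define R where "R = diameter (A \<union> B)"
  have R: "dist a b \<le> R" if "a \<in> A" "b \<in> B" for a b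
    unfolding R_def using A(1) B(2) that by (intro diameter_bounded_bound) auto
  have approx: "\<exists>b\<in>B. dist a b \<le> \<bar>c\<bar> ^ n * R" if "a \<in> A" for a n
    using that
  proof (induction n arbitrary: a)
    case 0
    then show ?case using B(3) R by auto
  next
    case (Suc n)
    have "a \<in> hutchinson c t1 t2 A" by (rule subsetD[OF A(2) Suc.prems])
    then obtain t a' where t: "t \<in> {t1, t2}" "a' \<in> A" "a = sim c t a'"
      unfolding hutchinson_def by blast
    obtain b where b: "b \<in> B" "dist a' b \<le> \<bar>c\<bar> ^ n * R"
      using Suc.IH[OF t(2)] by blast
    have "sim c t b \<in> hutchinson c t1 t2 B" using b(1) t(1) unfolding hutchinson_def by blast
    with B(4) have "sim c t b \<in> B" by (rule subsetD)
    moreover have "dist a (sim c t b) \<le> \<bar>c\<bar> ^ Suc n * R"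
      using mult_left_mono[OF b(2) abs_ge_zero[of c]] by (simp add: t(3) dist_sim mult.assoc)
    ultimately show ?case by blast
  qed
  fix a assume "a \<in> A"
  have "a \<in> closure B"
    unfolding closure_approachable
  proof (intro allI impI)
    fix e :: real assume "0 < e"
    have "(\<lambda>n. \<bar>c\<bar> ^ n * R) \<longlonglongrightarrow> 0 * R"
      using c by (intro tendsto_mult_right LIMSEQ_power_zero) auto
    then have "\<forall>\<^sub>F n in sequentially. \<bar>c\<bar> ^ n * R < e"
      using \<open>0 < e\<close> by (simp add: order_tendstoD(2))
    then obtain n where "\<bar>c\<bar> ^ n * R < e"
      using eventually_sequentially by auto
    with approx[OF \<open>a \<in> A\<close>, of n] show "\<exists>b\<in>B. dist b a < e"
      by (metis dist_commute order.strict_trans1)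
  qed
  then show "a \<in> B" using B(1) by (simp add: closure_closed)
qed

lemma attractor_eqI:
  assumes c: "\<bar>c\<bar> < 1" and F: "compact F" "F \<noteq> {}" "hutchinson c t1 t2 F = F"
  shows "attractor c t1 t2 = F"
  unfolding attractor_def
proof (rule the_equality)
  show "compact F \<and> F \<noteq> {} \<and> F = sim c t1 ` F \<union> sim c t2 ` F"
    by (intro conjI F(1,2) F(3)[unfolded hutchinson_def, symmetric])
  fix A assume "compact A \<and> A \<noteq> {} \<and> A = sim c t1 ` A \<union> sim c t2 ` A"
  then have A: "compact A" "A \<noteq> {}" "hutchinson c t1 t2 A = A"
    unfolding hutchinson_def by metis+
  have "bounded A" "closed A" "bounded F" "closed F"
    using A(1) F(1) by (simp_all add: compact_imp_bounded compact_imp_closed)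
  then show "A = F"
    using hutchinson_invariant_subset[OF c _ eq_refl _ _ F(2) eq_refl]
      hutchinson_invariant_subset[OF c _ eq_refl _ _ A(2) eq_refl] A(3) F(3)
    by (metis equalityI)
qed

lemma INT_Un_decseq:
  fixes U V :: "nat \<Rightarrow> 'a set"
  assumes "decseq U" "decseq V"
  shows "(\<Inter>n. U n \<union> V n) = (\<Inter>n. U n) \<union> (\<Inter>n. V n)"
proof (rule equalityI; rule subsetI)
  fix x assume x: "x \<in> (\<Inter>n. U n \<union> V n)"
  show "x \<in> (\<Inter>n. U n) \<union> (\<Inter>n. V n)"
  proof (rule ccontr)
    assume "x \<notin> (\<Inter>n. U n) \<union> (\<Inter>n. V n)"
    then obtain m k where "x \<notin> U m" "x \<notin> V k" by blast
    then have "x \<notin> U (max m k)" "x \<notin> V (max m k)"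
      using decseqD[OF assms(1), of m "max m k"] decseqD[OF assms(2), of k "max m k"] by auto
    then show False using x by blast
  qed
qed blast

lemma hutchinson_mono: "A \<subseteq> B \<Longrightarrow> hutchinson c t1 t2 A \<subseteq> hutchinson c t1 t2 B"
  unfolding hutchinson_def by blast

lemma continuous_on_sim: "continuous_on S (sim c t)"
  unfolding sim_def by (intro continuous_intros)

lemma compact_hutchinson: "compact A \<Longrightarrow> compact (hutchinson c t1 t2 A)"
  unfolding hutchinson_def by (intro compact_Un compact_continuous_image continuous_on_sim)

lemma compact_hutchinson_iterate: "compact ((hutchinson c t1 t2 ^^ n) {0..1})"
  by (induction n) (simp_all add: compact_hutchinson)

lemma sim_unit_interval: "0 \<le> c \<Longrightarrow> 0 \<le> t \<Longrightarrow> t \<le> 1 - c \<Longrightarrow> x \<in> {0..1} \<Longrightarrow> sim c t x \<in> {0..1}"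
  using mult_left_le[of x c] by (simp add: sim_def)

lemma attractor_eq_INT_hutchinson:
  assumes c: "0 < c" "c < 1" and t: "0 \<le> t1" "t1 \<le> 1 - c" "0 \<le> t2" "t2 \<le> 1 - c"
  shows "attractor c t1 t2 = (\<Inter>n. (hutchinson c t1 t2 ^^ n) {0..1})"
proof (rule attractor_eqI)
  let ?H = "hutchinson c t1 t2"
  define K where "K n = (?H ^^ n) {0..1}" for n
  have "?H {0..1} \<subseteq> {0..1}"
    using sim_unit_interval c t unfolding hutchinson_def by auto
  then have K_dec: "decseq K"
    unfolding K_def by (intro decseq_SucI) (simp add: funpow_swap1 funpow_mono mono_def hutchinson_mono)
  show "\<bar>c\<bar> < 1" using c by simp
  show "compact (\<Inter>n. K n)"
    unfolding K_def by (intro compact_Inter) (auto simp: compact_hutchinson_iterate)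
  have "sim c t1 (t1 / (1 - c)) = t1 / (1 - c)"
    using c by (simp add: sim_def field_simps)
  then have "t1 / (1 - c) \<in> K n" for n
  proof (induction n)
    case 0
    show ?case using c t by (simp add: K_def)
  next
    case (Suc n)
    then show ?case by (force simp: K_def hutchinson_def)
  qed
  then show "(\<Inter>n. K n) \<noteq> {}" by blast
  have image_INT: "sim c t ` (\<Inter>n. K n) = (\<Inter>n. sim c t ` K n)" for t
    using c by (intro image_INT[of _ UNIV]) (auto simp: inj_on_def sim_def)
  have dec_image: "decseq (\<lambda>n. sim c t ` K n)" for t
    using K_dec by (auto simp: decseq_def)
  have "?H (\<Inter>n. K n) = (\<Inter>n. K (Suc n))"
    unfolding hutchinson_def image_INT INT_Un_decseq[OF dec_image dec_image, symmetric]
    by (simp add: K_def hutchinson_def)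
  also have "\<dots> = (\<Inter>n. K n)"
    using K_dec by (auto simp: decseq_Suc_iff)
  finally show "?H (\<Inter>n. (?H ^^ n) {0..1}) = (\<Inter>n. (?H ^^ n) {0..1})"
    by (simp add: K_def)
qed

section \<open>Borel probability measures on metric spaces\<close>

lemma borel_measurable_continuous_sets_borel:
  "sets M = sets borel \<Longrightarrow> continuous_on UNIV f \<Longrightarrow> f \<in> borel_measurable M"
  using borel_measurable_continuous_onI measurable_cong_sets by blast

lemma integrable_continuous_AE_compact:
  fixes f :: "'a::metric_space \<Rightarrow> real"
  assumes "finite_measure M" "sets M = sets borel" "compact K" "AE z in M. z \<in> K"
    and "continuous_on UNIV f"
  shows "integrable M f"
proof -
  interpret finite_measure M by fact
  obtain B where B: "\<And>z. z \<in> K \<Longrightarrow> norm (f z) \<le> B"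
    using compact_imp_bounded[OF compact_continuous_image[OF continuous_on_subset[OF assms(5)] assms(3)]]
    unfolding bounded_iff by blast
  show ?thesis
  proof (rule integrable_const_bound)
    show "AE z in M. norm (f z) \<le> B" using assms(4) by (rule eventually_mono) (rule B)
    show "f \<in> borel_measurable M"
      using assms(2,5) by (rule borel_measurable_continuous_sets_borel)
  qed
qed

lemma abs_integral_diff_le_AE:
  fixes f :: "'a \<Rightarrow> real"
  assumes "prob_space M" "integrable M f" "AE z in M. z \<in> K" "\<And>z. z \<in> K \<Longrightarrow> \<bar>f z - a\<bar> \<le> B"
  shows "\<bar>(\<integral>z. f z \<partial>M) - a\<bar> \<le> B"
proof -
  interpret prob_space M by fact
  have bounds: "AE z in M. a - B \<le> f z \<and> f z \<le> a + B"
    using assms(3) by (rule eventually_mono) (use assms(4) in \<open>fastforce simp: abs_le_iff\<close>)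
  have "(\<integral>z. f z \<partial>M) \<le> (\<integral>z. a + B \<partial>M)" "(\<integral>z. a - B \<partial>M) \<le> (\<integral>z. f z \<partial>M)"
    using bounds by (intro integral_mono_AE assms(2); auto elim: eventually_mono)+
  then show ?thesis by (simp add: prob_space abs_le_iff)
qed

lemma set_integral_eq_integral_AE:
  fixes f :: "'a \<Rightarrow> real"
  assumes "AE z in M. z \<in> A" "A \<in> sets M" "f \<in> borel_measurable M"
  shows "(\<integral>z\<in>A. f z \<partial>M) = (\<integral>z. f z \<partial>M)"
  unfolding set_lebesgue_integral_def
  using assms by (intro integral_cong_AE) (auto elim: eventually_mono)

lemma lipschitz_infdist_cutoff:
  "(real n)-lipschitz_on UNIV (\<lambda>z. min 1 (real n * infdist z C))"
proof (rule lipschitz_onI)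
  fix u v :: 'a
  have "\<bar>min 1 (real n * infdist u C) - min 1 (real n * infdist v C)\<bar>
      \<le> \<bar>real n * infdist u C - real n * infdist v C\<bar>"
    by (simp add: min_def abs_if)
  also have "\<dots> = real n * \<bar>infdist u C - infdist v C\<bar>"
    by (simp add: right_diff_distrib[symmetric] abs_mult)
  also have "\<dots> \<le> real n * dist u v"
    by (intro mult_left_mono infdist_triangle_abs) auto
  finally show "dist (min 1 (real n * infdist u C)) (min 1 (real n * infdist v C)) \<le> real n * dist u v"
    by (simp add: dist_real_def)
qed simp

lemma infdist_cutoff_tendsto_indicator:
  assumes "closed C" "C \<noteq> {}"
  shows "(\<lambda>n. min 1 (real n * infdist z C)) \<longlonglongrightarrow> indicator (- C) z"
proof (cases "z \<in> C")
  case False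
  then have pos: "0 < infdist z C"
    using assms in_closure_iff_infdist_zero[OF assms(2)] infdist_nonneg[of z C]
    by (auto simp: closure_closed)
  obtain N :: nat where N: "1 / infdist z C < real N" using reals_Archimedean2 by blast
  have "min 1 (real n * infdist z C) = 1" if "N \<le> n" for n
  proof -
    have "1 / infdist z C < real n" using N that by linarith
    then show ?thesis using pos by (simp add: field_simps)
  qed
  then have "\<forall>\<^sub>F n in sequentially. min 1 (real n * infdist z C) = 1"
    by (auto simp: eventually_sequentially)
  then show ?thesis using False by (simp add: tendsto_eventually)
qed simp

lemma prob_space_eqI_lipschitz:
  fixes M N :: "'a::metric_space measure"
  assumes M: "prob_space M" "sets M = sets borel" and N: "prob_space N" "sets N = sets borel"
    and eq: "\<And>(f :: 'a \<Rightarrow> real) L. L-lipschitz_on UNIV f \<Longrightarrow> (\<integral>z. f z \<partial>M) = (\<integral>z. f z \<partial>N)"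
  shows "M = N"
proof -
  have tendsto_measure: "(\<lambda>n. \<integral>z. min 1 (real n * infdist z (- U)) \<partial>X) \<longlonglongrightarrow> measure X U"
    if "prob_space X" "sets X = sets borel" "open U" "U \<noteq> UNIV" for X and U :: "'a set"
  proof -
    interpret prob_space X by fact
    have "(\<lambda>n. \<integral>z. min 1 (real n * infdist z (- U)) \<partial>X) \<longlonglongrightarrow> (\<integral>z. indicator U z \<partial>X)"
    proof (rule integral_dominated_convergence[where w="\<lambda>_. 1"])
      show "(\<lambda>z. min 1 (real n * infdist z (- U))) \<in> borel_measurable X" for n
        using that(2) lipschitz_on_continuous_on[OF lipschitz_infdist_cutoff]
        by (rule borel_measurable_continuous_sets_borel)
      show "AE z in X. (\<lambda>n. min 1 (real n * infdist z (- U))) \<longlonglongrightarrow> indicator U z"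
        using infdist_cutoff_tendsto_indicator[of "- U"] that(3,4) by auto
      show "AE z in X. norm (min 1 (real n * infdist z (- U))) \<le> 1" for n
        by (simp add: infdist_nonneg)
      have "U \<in> sets X" using that(2,3) by simp
      then show "indicator U \<in> borel_measurable X" by (rule borel_measurable_indicator)
    qed simp
    then show ?thesis using that(2,3) by simp
  qed
  interpret M': prob_space M by (rule M(1))
  interpret N': prob_space N by (rule N(1))
  have space: "space M = UNIV" "space N = UNIV"
    using sets_eq_imp_space_eq[OF M(2)] sets_eq_imp_space_eq[OF N(2)] by simp_all
  have open_eq: "emeasure M U = emeasure N U" if "open U" for U
  proof (cases "U = UNIV")
    case True
    then show ?thesis
      using M'.emeasure_space_1 N'.emeasure_space_1 space by simp
  next
    case False
    have "measure M U = measure N U"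
      using LIMSEQ_unique[OF tendsto_measure[OF M that False]] tendsto_measure[OF N that False]
        eq[OF lipschitz_infdist_cutoff] by simp
    then show ?thesis
      by (simp add: M'.emeasure_eq_measure N'.emeasure_eq_measure)
  qed
  show ?thesis
  proof (rule measure_eqI_generator_eq[where E="Collect open" and \<Omega>=UNIV and A="\<lambda>_. UNIV"])
    show "emeasure M UNIV \<noteq> \<infinity>"
      using M'.emeasure_space_1 space by simp
  qed (use M N open_eq in \<open>auto simp: Int_stable_def sets_borel\<close>)
qed

section \<open>Self-similar measures of a contractive iterated function system\<close>

locale contractive_ifs =
  fixes P :: "'i::finite pmf" and S :: "'i \<Rightarrow> 'a::metric_space \<Rightarrow> 'a"
    and K :: "'a set" and c :: real
  assumes compact_K: "compact K"
    and continuous_S: "continuous_on UNIV (S i)"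
    and S_K: "S i ` K \<subseteq> K"
    and lipschitz_S: "c-lipschitz_on K (S i)"
    and c_less_1: "c < 1"
begin

definition markov_operator :: "'a measure \<Rightarrow> 'a measure" where
  "markov_operator M = distr (measure_pmf P \<Otimes>\<^sub>M M) borel (\<lambda>(i, z). S i z)"

definition self_similar :: "'a measure \<Rightarrow> bool" where
  "self_similar M \<longleftrightarrow>
    prob_space M \<and> sets M = sets borel \<and> (AE z in M. z \<in> K) \<and> markov_operator M = M"

lemma c_nonneg: "0 \<le> c"
  using lipschitz_on_nonneg[OF lipschitz_S] .

lemma borel_measurable_S: "S i \<in> borel_measurable borel"
  by (rule borel_measurable_continuous_onI[OF continuous_S])

lemma measurable_case_prod_S:
  assumes "sets M = sets borel"
  shows "(\<lambda>(i, z). S i z) \<in> measurable (measure_pmf P \<Otimes>\<^sub>M M) borel"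
proof -
  have "(\<lambda>(i, z). S i z) \<in> measurable (count_space UNIV \<Otimes>\<^sub>M borel) borel"
    by (rule measurable_pair_measure_countable1) (simp_all add: borel_measurable_S)
  moreover have "sets (measure_pmf P \<Otimes>\<^sub>M M) = sets (count_space UNIV \<Otimes>\<^sub>M borel)"
    by (intro sets_pair_measure_cong sets_measure_pmf_count_space assms)
  ultimately show ?thesis
    using measurable_cong_sets by blast
qed

lemma sets_markov_operator [simp]: "sets (markov_operator M) = sets borel"
  by (simp add: markov_operator_def)

lemma emeasure_markov_operator:
  assumes "prob_space M" "sets M = sets borel" "A \<in> sets borel"
  shows "emeasure (markov_operator M) A = (\<integral>\<^sup>+i. emeasure M (S i -` A) \<partial>measure_pmf P)"
proof -
  interpret prob_space M by fact
  let ?Q = "measure_pmf P \<Otimes>\<^sub>M M"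
  have "(\<lambda>(i, z). S i z) -` A \<inter> space ?Q \<in> sets ?Q"
    using measurable_sets[OF measurable_case_prod_S[OF assms(2)] assms(3)] .
  then have "emeasure (markov_operator M) A
      = (\<integral>\<^sup>+i. emeasure M (Pair i -` ((\<lambda>(i, z). S i z) -` A \<inter> space ?Q)) \<partial>measure_pmf P)"
    unfolding markov_operator_def
    by (simp add: emeasure_distr[OF measurable_case_prod_S[OF assms(2)] assms(3)] emeasure_pair_measure_alt)
  also have "\<dots> = (\<integral>\<^sup>+i. emeasure M (S i -` A) \<partial>measure_pmf P)"
    using sets_eq_imp_space_eq[OF assms(2)] by (simp add: space_pair_measure vimage_def)
  finally show ?thesis .
qed

lemma integrable_self_similar:
  fixes f :: "'a \<Rightarrow> real"
  shows "self_similar M \<Longrightarrow> continuous_on UNIV f \<Longrightarrow> integrable M f"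
  unfolding self_similar_def
  by (metis integrable_continuous_AE_compact compact_K prob_space_def)

lemma integral_self_similar:
  fixes f :: "'a \<Rightarrow> real"
  assumes M: "self_similar M" and f: "continuous_on UNIV f"
  shows "(\<integral>z. f z \<partial>M) = (\<Sum>i\<in>UNIV. pmf P i * (\<integral>z. f (S i z) \<partial>M))"
proof -
  have "prob_space M" and sets: "sets M = sets borel" and fixed: "markov_operator M = M"
    using M by (simp_all add: self_similar_def)
  interpret prob_space M by fact
  interpret pair_prob_space "measure_pmf P" M ..
  have meas_f: "f \<in> borel_measurable borel"
    by (rule borel_measurable_continuous_onI[OF f])
  have "integrable (markov_operator M) f"
    using integrable_self_similar[OF M f] fixed by simp
  then have int: "integrable (measure_pmf P \<Otimes>\<^sub>M M) (\<lambda>x. f (case x of (i, z) \<Rightarrow> S i z))"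
    unfolding markov_operator_def by (simp add: integrable_distr_eq[OF measurable_case_prod_S[OF sets] meas_f])
  have "(\<integral>z. f z \<partial>M) = (\<integral>z. f z \<partial>markov_operator M)"
    using fixed by simp
  also have "\<dots> = (\<integral>x. f (case x of (i, z) \<Rightarrow> S i z) \<partial>(measure_pmf P \<Otimes>\<^sub>M M))"
    unfolding markov_operator_def by (rule integral_distr[OF measurable_case_prod_S[OF sets] meas_f])
  also have "\<dots> = (\<integral>i. (\<integral>z. f (S i z) \<partial>M) \<partial>measure_pmf P)"
    using integral_fst'[OF int] by simp
  also have "\<dots> = (\<Sum>i\<in>UNIV. pmf P i * (\<integral>z. f (S i z) \<partial>M))"
    by (subst integral_measure_pmf[where A=UNIV]) auto
  finally show ?thesis .
qed

lemma AE_self_similar_image: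
  assumes M: "self_similar M" and A: "AE z in M. z \<in> A"
    and B: "B \<in> sets borel" "\<And>i. S i ` A \<subseteq> B"
  shows "AE z in M. z \<in> B"
proof -
  have "prob_space M" and sets: "sets M = sets borel" and fixed: "markov_operator M = M"
    using M by (simp_all add: self_similar_def)
  have space: "space M = UNIV"
    using sets_eq_imp_space_eq[OF sets] by simp
  have preimage_null: "emeasure M (S i -` (- B)) = 0" for i
  proof -
    have "AE z in M. S i z \<in> B"
      using A by (rule eventually_mono) (use B(2) in blast)
    moreover have "S i -` (- B) \<in> sets M"
      using measurable_sets[OF borel_measurable_S, of "- B" i] B(1) sets by simp
    ultimately show ?thesis
      by (subst (asm) AE_iff_measurable[where N="S i -` (- B)"]) (auto simp: space)
  qed
  have "emeasure M (- B) = emeasure (markov_operator M) (- B)"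
    using fixed by simp
  also have "\<dots> = 0"
    using B(1) by (simp add: emeasure_markov_operator[OF \<open>prob_space M\<close> sets] preimage_null)
  finally show ?thesis
    using B(1) sets by (subst AE_iff_measurable[where N="- B"]) (auto simp: space)
qed

lemma sum_pmf_UNIV: "(\<Sum>i\<in>UNIV. pmf P i) = 1"
  by (rule sum_pmf_eq_1) auto

lemma self_similar_integral_diff_le:
  fixes f :: "'a \<Rightarrow> real"
  assumes M: "self_similar M" and N: "self_similar N"
  shows "continuous_on UNIV f \<Longrightarrow> L-lipschitz_on K f \<Longrightarrow>
    \<bar>(\<integral>z. f z \<partial>M) - (\<integral>z. f z \<partial>N)\<bar> \<le> 2 * L * diameter K * c ^ n"
proof (induction n arbitrary: f L)
  case 0
  have "K \<noteq> {}"
  proof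
    assume "K = {}"
    moreover have "prob_space M" "AE z in M. z \<in> K" using M by (simp_all add: self_similar_def)
    ultimately have "prob_space M" "AE z in M. False" by simp_all
    then show False by (simp add: prob_space.AE_False)
  qed
  then obtain z0 where "z0 \<in> K" by blast
  have near: "\<bar>f z - f z0\<bar> \<le> L * diameter K" if "z \<in> K" for z
    using lipschitz_onD[OF "0.prems"(2) that \<open>z0 \<in> K\<close>] lipschitz_on_nonneg[OF "0.prems"(2)]
      diameter_bounded_bound[OF compact_imp_bounded[OF compact_K] that \<open>z0 \<in> K\<close>]
    by (simp add: dist_real_def) (meson mult_left_mono order_trans)
  have "\<bar>(\<integral>z. f z \<partial>X) - f z0\<bar> \<le> L * diameter K" if "self_similar X" for X
    using that near integrable_self_similar[OF that "0.prems"(1)]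
    by (intro abs_integral_diff_le_AE[where K=K]) (auto simp: self_similar_def)
  from this[OF M] this[OF N] show ?case by simp
next
  case (Suc n)
  have IH: "\<bar>(\<integral>z. f (S i z) \<partial>M) - (\<integral>z. f (S i z) \<partial>N)\<bar> \<le> 2 * (L * c) * diameter K * c ^ n" for i
  proof (rule Suc.IH)
    show "continuous_on UNIV (\<lambda>z. f (S i z))"
      using continuous_on_compose[OF continuous_S continuous_on_subset[OF Suc.prems(1)]] by (simp add: o_def)
    show "(L * c)-lipschitz_on K (\<lambda>z. f (S i z))"
      using lipschitz_on_compose2[OF lipschitz_S lipschitz_on_mono[OF Suc.prems(2) S_K order_refl]]
      by (simp add: mult.commute)
  qed
  have "(\<integral>z. f z \<partial>M) - (\<integral>z. f z \<partial>N)
      = (\<Sum>i\<in>UNIV. pmf P i * ((\<integral>z. f (S i z) \<partial>M) - (\<integral>z. f (S i z) \<partial>N)))"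
    by (simp add: integral_self_similar[OF M Suc.prems(1)] integral_self_similar[OF N Suc.prems(1)]
        sum_subtractf[symmetric] right_diff_distrib)
  also have "\<bar>\<dots>\<bar> \<le> (\<Sum>i\<in>UNIV. pmf P i * (2 * (L * c) * diameter K * c ^ n))"
    by (rule order_trans[OF sum_abs sum_mono]) (simp add: abs_mult mult_left_mono IH)
  also have "\<dots> = 2 * L * diameter K * c ^ Suc n"
    by (simp add: sum_distrib_right[symmetric] sum_pmf_UNIV)
  finally show ?case .
qed

lemma self_similar_integral_eq:
  fixes f :: "'a \<Rightarrow> real"
  assumes M: "self_similar M" and N: "self_similar N" and f: "L-lipschitz_on UNIV f"
  shows "(\<integral>z. f z \<partial>M) = (\<integral>z. f z \<partial>N)"
proof -
  have "(\<lambda>n. 2 * L * diameter K * c ^ n) \<longlonglongrightarrow> 2 * L * diameter K * 0"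
    using c_nonneg c_less_1 by (intro tendsto_mult_left LIMSEQ_power_zero) auto
  moreover have "\<bar>(\<integral>z. f z \<partial>M) - (\<integral>z. f z \<partial>N)\<bar> \<le> 2 * L * diameter K * c ^ n" for n
    using lipschitz_on_continuous_on[OF f] lipschitz_on_mono[OF f subset_UNIV order_refl]
    by (rule self_similar_integral_diff_le[OF M N])
  ultimately have "\<bar>(\<integral>z. f z \<partial>M) - (\<integral>z. f z \<partial>N)\<bar> \<le> 0"
    by (intro LIMSEQ_le_const) auto
  then show ?thesis by simp
qed

lemma self_similar_unique: "self_similar M \<Longrightarrow> self_similar N \<Longrightarrow> M = N"
  by (rule prob_space_eqI_lipschitz) (auto simp: self_similar_def intro: self_similar_integral_eq)

lemma self_similar_distr_coding:
  assumes X: "X \<in> measurable (stream_space (measure_pmf P)) borel"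
    and X_K: "\<And>w. X w \<in> K" and X_SCons: "\<And>i w. X (i ## w) = S i (X w)"
  shows "self_similar (distr (stream_space (measure_pmf P)) borel X)"
proof -
  let ?W = "stream_space (measure_pmf P)" let ?M = "distr ?W borel X"
  interpret W: prob_space ?W
    by (rule prob_space.prob_space_stream_space) (rule measure_pmf.prob_space_axioms)
  have M: "prob_space ?M" "sets ?M = sets borel"
    using W.prob_space_distr[OF X] by simp_all
  have emeasure_M: "emeasure ?M A = (\<integral>\<^sup>+w. indicator A (X w) \<partial>?W)" if "A \<in> sets borel" for A
  proof -
    have "emeasure ?M A = (\<integral>\<^sup>+z. indicator A z \<partial>?M)"
      using that by simp
    also have "\<dots> = (\<integral>\<^sup>+w. indicator A (X w) \<partial>?W)"
      using X that by (intro nn_integral_distr) auto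
    finally show ?thesis .
  qed
  have "emeasure ?M A = emeasure (markov_operator ?M) A" if A: "A \<in> sets borel" for A
  proof -
    have "emeasure ?M A = (\<integral>\<^sup>+i. (\<integral>\<^sup>+w. indicator A (X (i ## w)) \<partial>?W) \<partial>measure_pmf P)"
      unfolding emeasure_M[OF A] using A X
      by (intro prob_space.nn_integral_stream_space[OF measure_pmf.prob_space_axioms]) simp
    also have "\<dots> = (\<integral>\<^sup>+i. emeasure ?M (S i -` A) \<partial>measure_pmf P)"
    proof (rule nn_integral_cong)
      fix i
      have "S i -` A \<in> sets borel"
        using measurable_sets[OF borel_measurable_S A] by simp
      then show "(\<integral>\<^sup>+w. indicator A (X (i ## w)) \<partial>?W) = emeasure ?M (S i -` A)"
        by (simp add: emeasure_M X_SCons indicator_def)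
    qed
    also have "\<dots> = emeasure (markov_operator ?M) A"
      using emeasure_markov_operator[OF M A] by simp
    finally show ?thesis .
  qed
  then have "markov_operator ?M = ?M"
    by (intro measure_eqI) (simp_all add: M(2))
  moreover have "AE z in ?M. z \<in> K"
    using X X_K borel_closed[OF compact_imp_closed[OF compact_K]] by (subst AE_distr_iff) auto
  ultimately show ?thesis
    using M by (simp add: self_similar_def)
qed

end

section \<open>The self-similar coupling\<close>

lemma sum_UNIV_bool_pair:
  "(\<Sum>b\<in>UNIV. g b) = g (True, True) + g (True, False) + g (False, True) + g (False, False)"
  by (simp add: UNIV_Times_UNIV[symmetric] sum.cartesian_product[symmetric] UNIV_bool ac_simps)

lemma continuous_on_sim2: "continuous_on S (sim2 c s t)"
  unfolding sim2_def sim_def by (intro continuous_intros)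

lemma dist_sim2: "dist (sim2 c s t u) (sim2 c s t v) = \<bar>c\<bar> * dist u v"
proof -
  have "dist (sim2 c s t u) (sim2 c s t v) = sqrt (c\<^sup>2 * ((dist (fst u) (fst v))\<^sup>2 + (dist (snd u) (snd v))\<^sup>2))"
    by (simp add: sim2_def dist_Pair_Pair dist_sim power_mult_distrib distrib_left)
  also have "\<dots> = \<bar>c\<bar> * dist u v"
    by (simp add: real_sqrt_mult dist_prod_def)
  finally show ?thesis .
qed

definition expansion :: "real \<Rightarrow> (nat \<Rightarrow> real) \<Rightarrow> real" where
  "expansion c a = (\<Sum>n. c ^ n * a n)"

lemma
  assumes c: "0 \<le> c" "c < 1" and a: "\<And>n. 0 \<le> a n" "\<And>n. a n \<le> 1 - c"
  shows summable_expansion: "summable (\<lambda>n. c ^ n * a n)"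
    and expansion_unit_interval: "expansion c a \<in> {0..1}"
proof -
  have geom: "summable (\<lambda>n. c ^ n)" using c by simp
  have le: "c ^ n * a n \<le> c ^ n * (1 - c)" for n
    using a c by (simp add: mult_left_mono)
  show summable: "summable (\<lambda>n. c ^ n * a n)"
    using a c le by (intro summable_comparison_test'[OF summable_mult2[OF geom, of "1 - c"]]) auto
  have "expansion c a \<le> (\<Sum>n. c ^ n * (1 - c))"
    unfolding expansion_def using summable le by (intro suminf_le summable_mult2 geom) auto
  also have "\<dots> = 1"
    using c by (simp add: suminf_mult2[OF geom, symmetric] suminf_geometric)
  finally show "expansion c a \<in> {0..1}"
    using a c summable by (auto simp: expansion_def intro!: suminf_nonneg)
qed

lemma expansion_Suc:
  assumes c: "0 \<le> c" "c < 1" and a: "\<And>n. 0 \<le> a n" "\<And>n. a n \<le> 1 - c"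
  shows "expansion c a = a 0 + c * expansion c (\<lambda>n. a (Suc n))"
proof -
  have "expansion c a = a 0 + (\<Sum>n. c ^ Suc n * a (Suc n))"
    using suminf_split_head[OF summable_expansion[of c a, OF c a]] by (simp add: expansion_def)
  also have "(\<Sum>n. c ^ Suc n * a (Suc n)) = c * expansion c (\<lambda>n. a (Suc n))"
    using suminf_mult[OF summable_expansion[OF c, of "\<lambda>n. a (Suc n)"], of c] a
    by (simp add: expansion_def mult.assoc)
  finally show ?thesis .
qed

locale coupling_ifs =
  fixes c t1 t2 p q r :: real
  assumes c_pos: "0 < c" and t1_nonneg: "0 \<le> t1" and t1_t2: "t1 + c \<le> t2" and t2_le: "t2 \<le> 1 - c"
    and weights_nonneg: "0 \<le> r" "r \<le> p" "r \<le> q" "p + q - 1 \<le> r"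
begin

definition shift :: "bool \<Rightarrow> real" where
  "shift i = (if i then t1 else t2)"

definition sim_pair :: "bool \<times> bool \<Rightarrow> real \<times> real \<Rightarrow> real \<times> real" where
  "sim_pair ij = sim2 c (shift (fst ij)) (shift (snd ij))"

definition weight :: "bool \<times> bool \<Rightarrow> real" where
  "weight ij = (if fst ij then if snd ij then r else p - r else if snd ij then q - r else 1 - p - q + r)"

definition coupling_pmf :: "(bool \<times> bool) pmf" where
  "coupling_pmf = embed_pmf weight"

abbreviation unit_square :: "(real \<times> real) set" where
  "unit_square \<equiv> {0..1} \<times> {0..1}"

lemma unit_square_borel: "unit_square \<in> sets borel"
  by (intro borel_closed closed_Times closed_atLeastAtMost)

lemma c_less_1: "c < 1"
  using t1_nonneg t1_t2 t2_le by linarith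

lemma denominator_pos: "0 < 1 - c + c * (p + q - 2*r)"
proof -
  have "0 \<le> c * (p + q - 2*r)"
    using c_pos weights_nonneg by simp
  then show ?thesis using c_less_1 by linarith
qed

lemma shift_bounds: "0 \<le> shift i" "shift i \<le> 1 - c"
  using t1_nonneg t1_t2 t2_le c_pos by (auto simp: shift_def)

lemma pmf_coupling_pmf: "pmf coupling_pmf ij = weight ij"
  unfolding coupling_pmf_def
proof (rule pmf_embed_pmf)
  show "0 \<le> weight ij" for ij
    using weights_nonneg by (auto simp: weight_def)
  then have "(\<integral>\<^sup>+ij. ennreal (weight ij) \<partial>count_space UNIV) = ennreal (\<Sum>ij\<in>UNIV. weight ij)"
    by (simp add: nn_integral_count_space_finite sum_ennreal)
  then show "(\<integral>\<^sup>+ij. ennreal (weight ij) \<partial>count_space UNIV) = 1"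
    by (simp add: sum_UNIV_bool_pair weight_def)
qed

sublocale contractive_ifs coupling_pmf sim_pair unit_square c
proof
  show "compact unit_square" by (intro compact_Times compact_Icc)
  show "continuous_on UNIV (sim_pair ij)" for ij
    unfolding sim_pair_def by (rule continuous_on_sim2)
  show "sim_pair ij ` unit_square \<subseteq> unit_square" for ij
    using sim_unit_interval[OF less_imp_le[OF c_pos] shift_bounds]
    by (auto simp: sim_pair_def sim2_def)
  show "c-lipschitz_on unit_square (sim_pair ij)" for ij
    using c_pos by (intro lipschitz_onI) (simp_all add: sim_pair_def dist_sim2)
  show "c < 1" by (rule c_less_1)
qed

lemma emeasure_markov_operator_coupling:
  assumes "prob_space M" "sets M = sets borel" "A \<in> sets borel"
  shows "emeasure (markov_operator M) A = ennreal r * emeasure M (sim2 c t1 t1 -` A)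
                     + ennreal (p - r) * emeasure M (sim2 c t1 t2 -` A)
                     + ennreal (q - r) * emeasure M (sim2 c t2 t1 -` A)
                     + ennreal (1 - p - q + r) * emeasure M (sim2 c t2 t2 -` A)"
proof -
  have "emeasure (markov_operator M) A
      = (\<Sum>ij\<in>UNIV. emeasure M (sim_pair ij -` A) * pmf coupling_pmf ij)"
    unfolding emeasure_markov_operator[OF assms] by (rule nn_integral_measure_pmf_support) auto
  then show ?thesis
    by (simp add: sum_UNIV_bool_pair pmf_coupling_pmf weight_def sim_pair_def shift_def mult.commute)
qed

lemma self_similar_iff:
  "self_similar M \<longleftrightarrow> prob_space M \<and> sets M = sets (borel :: (real \<times> real) measure) \<and>
     emeasure M unit_square = 1 \<and>
     (\<forall>A \<in> sets (borel :: (real \<times> real) measure).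
        emeasure M A = ennreal r * emeasure M (sim2 c t1 t1 -` A)
                     + ennreal (p - r) * emeasure M (sim2 c t1 t2 -` A)
                     + ennreal (q - r) * emeasure M (sim2 c t2 t1 -` A)
                     + ennreal (1 - p - q + r) * emeasure M (sim2 c t2 t2 -` A))"
    (is "_ \<longleftrightarrow> ?prob \<and> ?sets \<and> ?square \<and> ?invariant")
proof (cases "?prob \<and> ?sets")
  case True
  then interpret prob_space M by simp
  have "unit_square \<in> sets M" using True unit_square_borel by simp
  then have "(AE z in M. z \<in> unit_square) \<longleftrightarrow> ?square"
    by (metis AE_in_set_eq_1 emeasure_eq_measure ennreal_eq_1 measure_nonneg)
  moreover have "markov_operator M = M \<longleftrightarrow> ?invariant"
  proof
    assume "markov_operator M = M"
    then show ?invariant using True emeasure_markov_operator_coupling[of M] by simp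
  next
    assume ?invariant
    then show "markov_operator M = M"
      using True by (intro measure_eqI) (simp_all add: emeasure_markov_operator_coupling)
  qed
  ultimately show ?thesis using True by (simp add: self_similar_def)
qed (auto simp: self_similar_def)

text \<open>The point with address \<open>w\<close>, \<open>lim\<^sub>n S\<^bsub>w\<^sub>0\<^esub> \<circ> \<dots> \<circ> S\<^bsub>w\<^sub>n\<^esub> (z)\<close>, written out for similarities.\<close>

definition coding :: "(bool \<times> bool) stream \<Rightarrow> real \<times> real" where
  "coding w = (expansion c (\<lambda>n. shift (fst (w !! n))), expansion c (\<lambda>n. shift (snd (w !! n))))"

lemma measurable_expansion:
  "(\<lambda>w. expansion c (\<lambda>n. g (w !! n))) \<in> borel_measurable (stream_space (measure_pmf coupling_pmf))"
  unfolding expansion_def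
proof (rule borel_measurable_suminf)
  fix n
  have "(\<lambda>x. c ^ n * g x) \<in> borel_measurable (measure_pmf coupling_pmf)" by simp
  then show "(\<lambda>w. c ^ n * g (w !! n)) \<in> borel_measurable (stream_space (measure_pmf coupling_pmf))"
    by (rule measurable_compose[OF measurable_snth])
qed

lemma self_similar_coding:
  "self_similar (distr (stream_space (measure_pmf coupling_pmf)) borel coding)"
proof (rule self_similar_distr_coding)
  have "coding \<in> measurable (stream_space (measure_pmf coupling_pmf)) (borel \<Otimes>\<^sub>M borel)"
    unfolding coding_def by (intro measurable_Pair measurable_expansion)
  then show "coding \<in> measurable (stream_space (measure_pmf coupling_pmf)) borel"
    by (simp add: borel_prod)
  show "coding w \<in> unit_square" for w
    using expansion_unit_interval[OF less_imp_le[OF c_pos] c_less_1 shift_bounds]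
    by (simp add: coding_def)
  show "coding (ij ## w) = sim_pair ij (coding w)" for ij w
  proof -
    have "expansion c (\<lambda>n. shift (g ((ij ## w) !! n)))
        = shift (g ij) + c * expansion c (\<lambda>n. shift (g (w !! n)))" for g :: "bool \<times> bool \<Rightarrow> bool"
      using expansion_Suc[OF less_imp_le[OF c_pos] c_less_1, of "\<lambda>n. shift (g ((ij ## w) !! n))"]
        shift_bounds by simp
    then show ?thesis by (simp add: coding_def sim_pair_def sim2_def sim_def)
  qed
qed

lemma self_similar_gamma_r: "self_similar (gamma_r c t1 t2 p q r)"
proof -
  have "\<exists>!M. self_similar M"
    using self_similar_coding self_similar_unique by blast
  then show ?thesis
    unfolding gamma_r_def self_similar_iff[symmetric] by (rule theI')
qed

lemma attractor_eq_INT: "attractor c t1 t2 = (\<Inter>n. (hutchinson c t1 t2 ^^ n) {0..1})"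
  using c_pos c_less_1 t1_nonneg t1_t2 t2_le by (intro attractor_eq_INT_hutchinson) linarith+

lemma compact_attractor: "compact (attractor c t1 t2)"
  unfolding attractor_eq_INT by (intro compact_Inter) (auto simp: compact_hutchinson_iterate)

lemma AE_attractor:
  assumes M: "self_similar M"
  shows "AE z in M. z \<in> attractor c t1 t2 \<times> attractor c t1 t2"
proof -
  let ?K = "\<lambda>n. (hutchinson c t1 t2 ^^ n) {0..1}"
  have "AE z in M. z \<in> ?K n \<times> ?K n" for n
  proof (induction n)
    case 0
    then show ?case using M by (simp add: self_similar_def)
  next
    case (Suc n)
    show ?case
    proof (rule AE_self_similar_image[OF M Suc.IH])
      show "?K (Suc n) \<times> ?K (Suc n) \<in> sets borel"
        by (intro borel_closed closed_Times compact_imp_closed compact_hutchinson_iterate)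
      show "sim_pair ij ` (?K n \<times> ?K n) \<subseteq> ?K (Suc n) \<times> ?K (Suc n)" for ij
        by (auto simp: sim_pair_def sim2_def shift_def hutchinson_def)
    qed
  qed
  then have "AE z in M. \<forall>n. z \<in> ?K n \<times> ?K n"
    by (simp add: AE_all_countable)
  then show ?thesis
    unfolding attractor_eq_INT by (auto elim!: eventually_mono)
qed

lemma integral_coupling:
  fixes f :: "real \<times> real \<Rightarrow> real"
  assumes "self_similar M" "continuous_on UNIV f"
  shows "(\<integral>z. f z \<partial>M) = r * (\<integral>z. f (sim2 c t1 t1 z) \<partial>M) + (p - r) * (\<integral>z. f (sim2 c t1 t2 z) \<partial>M)
    + (q - r) * (\<integral>z. f (sim2 c t2 t1 z) \<partial>M) + (1 - p - q + r) * (\<integral>z. f (sim2 c t2 t2 z) \<partial>M)"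
  using integral_self_similar[OF assms]
  by (simp add: sum_UNIV_bool_pair pmf_coupling_pmf weight_def sim_pair_def shift_def)

lemma integral_affine:
  fixes g :: "real \<times> real \<Rightarrow> real"
  assumes "self_similar M" "continuous_on UNIV g"
  shows "(\<integral>z. a * g z + b \<partial>M) = a * (\<integral>z. g z \<partial>M) + b"
proof -
  interpret prob_space M using assms(1) by (simp add: self_similar_def)
  show ?thesis using integrable_self_similar[OF assms] by (simp add: prob_space)
qed

lemma integral_cong_unit_square:
  fixes f g :: "real \<times> real \<Rightarrow> real"
  assumes M: "self_similar M" and "continuous_on UNIV f" "continuous_on UNIV g"
    and "\<And>z. z \<in> unit_square \<Longrightarrow> f z = g z"
  shows "(\<integral>z. f z \<partial>M) = (\<integral>z. g z \<partial>M)"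
proof (rule integral_cong_AE)
  have sets: "sets M = sets borel" using M by (simp add: self_similar_def)
  show "f \<in> borel_measurable M" "g \<in> borel_measurable M"
    using assms(2,3) by (simp_all add: borel_measurable_continuous_sets_borel[OF sets])
  show "AE z in M. f z = g z"
    using M assms(4) by (auto simp: self_similar_def elim!: eventually_mono)
qed

lemma integral_fst_coupling:
  assumes M: "self_similar M"
  shows "(1 - c) * (\<integral>z. fst z \<partial>M) = p * t1 + (1 - p) * t2"
proof -
  have cont: "continuous_on UNIV (fst :: real \<times> real \<Rightarrow> real)"
    by (intro continuous_intros)
  have branch: "(\<integral>z. fst (sim2 c t t' z) \<partial>M) = c * (\<integral>z. fst z \<partial>M) + t" for t t'
    using integral_affine[OF M cont] by (simp add: sim2_def sim_def)
  have "(\<integral>z. fst z \<partial>M) = r * (c * (\<integral>z. fst z \<partial>M) + t1) + (p - r) * (c * (\<integral>z. fst z \<partial>M) + t1)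
      + (q - r) * (c * (\<integral>z. fst z \<partial>M) + t2) + (1 - p - q + r) * (c * (\<integral>z. fst z \<partial>M) + t2)"
    by (subst integral_coupling[OF M cont]) (simp only: branch)
  then show ?thesis by (simp add: algebra_simps)
qed

lemma integral_snd_coupling:
  assumes M: "self_similar M"
  shows "(1 - c) * (\<integral>z. snd z \<partial>M) = q * t1 + (1 - q) * t2"
proof -
  have cont: "continuous_on UNIV (snd :: real \<times> real \<Rightarrow> real)"
    by (intro continuous_intros)
  have branch: "(\<integral>z. snd (sim2 c t t' z) \<partial>M) = c * (\<integral>z. snd z \<partial>M) + t'" for t t'
    using integral_affine[OF M cont] by (simp add: sim2_def sim_def)
  have "(\<integral>z. snd z \<partial>M) = r * (c * (\<integral>z. snd z \<partial>M) + t1) + (p - r) * (c * (\<integral>z. snd z \<partial>M) + t2)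
      + (q - r) * (c * (\<integral>z. snd z \<partial>M) + t1) + (1 - p - q + r) * (c * (\<integral>z. snd z \<partial>M) + t2)"
    by (subst integral_coupling[OF M cont]) (simp only: branch)
  then show ?thesis by (simp add: algebra_simps)
qed

lemma integral_diff_coupling:
  assumes M: "self_similar M"
  shows "(1 - c) * (\<integral>z. fst z - snd z \<partial>M) = (q - p) * (t2 - t1)"
proof -
  have "integrable M fst" "integrable M snd"
    by (intro integrable_self_similar[OF M] continuous_intros)+
  then have "(1 - c) * (\<integral>z. fst z - snd z \<partial>M) = (1 - c) * (\<integral>z. fst z \<partial>M) - (1 - c) * (\<integral>z. snd z \<partial>M)"
    by (simp add: right_diff_distrib)
  also have "\<dots> = (p * t1 + (1 - p) * t2) - (q * t1 + (1 - q) * t2)"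
    by (simp only: integral_fst_coupling[OF M] integral_snd_coupling[OF M])
  also have "\<dots> = (q - p) * (t2 - t1)"
    by (simp add: algebra_simps)
  finally show ?thesis .
qed

lemma integral_abs_diff_coupling:
  assumes M: "self_similar M"
  defines "D \<equiv> \<integral>z. fst z - snd z \<partial>M" and "A \<equiv> \<integral>z. \<bar>fst z - snd z\<bar> \<partial>M"
  shows "(1 - c + c * (p + q - 2*r)) * A = (p + q - 2*r) * (t2 - t1) + c * (q - p) * D"
proof -
  have cont_diff: "continuous_on UNIV (\<lambda>z::real \<times> real. fst z - snd z)"
    by (intro continuous_intros)
  have cont_abs: "continuous_on UNIV (\<lambda>z::real \<times> real. \<bar>fst z - snd z\<bar>)"
    by (intro continuous_intros)
  have diagonal: "(\<integral>z. \<bar>fst (sim2 c t t z) - snd (sim2 c t t z)\<bar> \<partial>M) = c * A" for t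
    using integral_affine[OF M cont_abs, of c 0] c_pos
    by (simp add: A_def sim2_def sim_def right_diff_distrib[symmetric] abs_mult)
  text \<open>Off the diagonal the two images lie in the disjoint intervals \<open>S\<^sub>1[0,1]\<close> and \<open>S\<^sub>2[0,1]\<close>,
    so the absolute value has a fixed sign there.\<close>
  have sign: "\<bar>(c * x + t1) - (c * y + t2)\<bar> = - c * (x - y) + (t2 - t1)"
    "\<bar>(c * x + t2) - (c * y + t1)\<bar> = c * (x - y) + (t2 - t1)" if "(x, y) \<in> unit_square" for x y
  proof -
    have "c * (x - y) \<le> c * 1" "c * (y - x) \<le> c * 1"
      using that c_pos by (intro mult_left_mono; simp)+
    then show "\<bar>(c * x + t1) - (c * y + t2)\<bar> = - c * (x - y) + (t2 - t1)"
      "\<bar>(c * x + t2) - (c * y + t1)\<bar> = c * (x - y) + (t2 - t1)"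
      using t1_t2 by (auto simp: abs_if algebra_simps)
  qed
  have off_diagonal_12:
    "(\<integral>z. \<bar>fst (sim2 c t1 t2 z) - snd (sim2 c t1 t2 z)\<bar> \<partial>M) = - c * D + (t2 - t1)"
    unfolding D_def integral_affine[OF M cont_diff, symmetric]
    by (intro integral_cong_unit_square[OF M] continuous_intros continuous_on_sim2)
      (auto simp: sim2_def sim_def sign)
  have off_diagonal_21:
    "(\<integral>z. \<bar>fst (sim2 c t2 t1 z) - snd (sim2 c t2 t1 z)\<bar> \<partial>M) = c * D + (t2 - t1)"
    unfolding D_def integral_affine[OF M cont_diff, symmetric]
    by (intro integral_cong_unit_square[OF M] continuous_intros continuous_on_sim2)
      (auto simp: sim2_def sim_def sign)
  have "A = r * (c * A) + (p - r) * (- c * D + (t2 - t1)) + (q - r) * (c * D + (t2 - t1))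
      + (1 - p - q + r) * (c * A)"
    using integral_coupling[OF M cont_abs]
    by (simp add: A_def[symmetric] diagonal off_diagonal_12 off_diagonal_21)
  then show ?thesis by (simp add: algebra_simps)
qed

end

lemma coupling_moment_identity:
  fixes c p q r T D A :: real
  assumes D: "(1 - c) * D = (q - p) * T"
    and A: "(1 - c + c * (p + q - 2*r)) * A = (p + q - 2*r) * T + c * (q - p) * D"
    and pq: "p \<noteq> q" and K: "1 - c + c * (p + q - 2*r) \<noteq> 0"
  shows "D = 4 * T * (q - r) * (p - r) / ((p - q) * (1 - c + c * (p + q - 2*r)))
    - ((p + q - 2*r) / (p - q)) * A"
    (is "D = ?X / ((p - q) * ?K) - (?s / (p - q)) * A")
proof -
  text \<open>Eliminating \<open>D\<close> leaves the identity \<open>?s\<^sup>2 - 4 (p - r) (q - r) = (p - q)\<^sup>2\<close>.\<close>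
  have key: "(p - q) * ?K * D = ?X - ?s * (?K * A)"
    unfolding A using D by algebra
  have den: "(p - q) * ?K \<noteq> 0" using pq K by simp
  have "(?s / (p - q)) * A = ?s * (?K * A) / ((p - q) * ?K)"
    using K by simp
  then have "?X / ((p - q) * ?K) - (?s / (p - q)) * A = (p - q) * ?K * D / ((p - q) * ?K)"
    by (simp only: key diff_divide_distrib)
  also have "\<dots> = D" using den by simp
  finally show ?thesis ..
qed

theorem lemma3p1:
  fixes c t1 t2 p q r :: real
  assumes "0 < c" "c \<le> 1/2"
    and "0 \<le> t1" "t1 \<le> 1 - 2*c"
    and "t1 + c \<le> t2" "t2 \<le> 1 - c"
    and "0 < p" "p < 1" "0 < q" "q < 1" "p \<noteq> q"
    and "r \<in> Lambda_pq p q"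
  shows "(\<integral>z \<in> attractor c t1 t2 \<times> attractor c t1 t2. (fst z - snd z) \<partial>(gamma_r c t1 t2 p q r))
       = 4 * (t2 - t1) * (q - r) * (p - r) / ((p - q) * (1 - c + c * (p + q - 2*r)))
         - ((p + q - 2*r) / (p - q)) *
           (\<integral>z \<in> attractor c t1 t2 \<times> attractor c t1 t2. \<bar>fst z - snd z\<bar> \<partial>(gamma_r c t1 t2 p q r))"
proof -
  have r: "0 < r" "p + q - 1 < r" "r < p" "r < q"
    using assms(12) by (simp_all add: Lambda_pq_def)
  interpret coupling_ifs c t1 t2 p q r
    using assms r by unfold_locales linarith+
  let ?F = "attractor c t1 t2 \<times> attractor c t1 t2" and ?M = "gamma_r c t1 t2 p q r"
  have M: "self_similar ?M" by (rule self_similar_gamma_r)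
  have sets: "sets ?M = sets borel" using M by (simp add: self_similar_def)
  have F: "?F \<in> sets ?M"
    unfolding sets by (intro borel_closed closed_Times compact_imp_closed compact_attractor)
  have set_integral: "(\<integral>z \<in> ?F. f z \<partial>?M) = (\<integral>z. f z \<partial>?M)"
    if "continuous_on UNIV f" for f :: "real \<times> real \<Rightarrow> real"
    using AE_attractor[OF M] F borel_measurable_continuous_sets_borel[OF sets that]
    by (rule set_integral_eq_integral_AE)
  have cont: "continuous_on UNIV (\<lambda>z::real \<times> real. fst z - snd z)"
    "continuous_on UNIV (\<lambda>z::real \<times> real. \<bar>fst z - snd z\<bar>)"
    by (intro continuous_intros)+
  show ?thesis
    unfolding set_integral[OF cont(1)] set_integral[OF cont(2)]
    by (rule coupling_moment_identity[OF integral_diff_coupling[OF M] integral_abs_diff_coupling[OF M]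
          assms(11) less_imp_neq[OF denominator_pos, symmetric]])
qed

end
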